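(* The homomorphism of graded $\mathbb{C}$-algebras $$\mathbb{C}[b,\sigma_1,\rho,\sigma_2,\tau,\sigma_3]/\big(\tau^2-\rho\sigma_2,\ \tau\sigma_3,\ \rho\sigma_3\big)\longrightarrow \mathbb{C}[b,q_1,q_2,q_3,\ell_1,\ell_2,\ell_3]/(q_1\ell_1,q_2\ell_2,q_3\ell_3)$$ defined by $b\mapsto b$, $\sigma_1\mapsto\ell_1+\ell_2+\ell_3$, $\rho\mapsto q_1^2+q_2^2+q_3^2-2(q_1q_2+q_1q_3+q_2q_3)$, $\sigma_2\mapsto\ell_1^2+\ell_2^2+\ell_3^2-2(\ell_1\ell_2+\ell_1\ell_3+\ell_2\ell_3)$, $\tau\mapsto\ell_1(q_3-q_2)+\ell_2(q_1-q_3)+\ell_3(q_2-q_1)$, $\sigma_3\mapsto\ell_1\ell_2\ell_3$ is injective. Moreover the Hilbert series of the source is $$\frac{1+u+2u^2+2u^3+2u^4}{(1-u)(1-u^2)^2(1-u^3)}.$$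
   Context: Gradings: $\deg b=\deg\sigma_1=1$, $\deg\rho=\deg\sigma_2=\deg\tau=2$, $\deg\sigma_3=3$ in the source; $b,q_i,\ell_i$ all of degree $1$ in the target. *)

theory Defs
  imports Complex_Main "HOL-Library.Poly_Mapping" "HOL-Computational_Algebra.Formal_Power_Series"
begin

text \<open>Multivariate polynomials over the complex numbers in variables of type 'v:
  finitely supported maps from monomials (exponent vectors) to coefficients.\<close>
type_synonym 'v cpoly = "('v \<Rightarrow>\<^sub>0 nat) \<Rightarrow>\<^sub>0 complex"

definition Var :: "'v \<Rightarrow> 'v cpoly" where
  "Var v = Poly_Mapping.single (Poly_Mapping.single v 1) 1"

definition Const :: "complex \<Rightarrow> 'v cpoly" where
  "Const c = Poly_Mapping.single 0 c"

definition smult_cp :: "complex \<Rightarrow> 'v cpoly \<Rightarrow> 'v cpoly" where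
  "smult_cp c p = Const c * p"

definition mon_eval :: "('v \<Rightarrow> 'w cpoly) \<Rightarrow> ('v \<Rightarrow>\<^sub>0 nat) \<Rightarrow> 'w cpoly" where
  "mon_eval f mo = (\<Prod>v\<in>Poly_Mapping.keys mo. f v ^ Poly_Mapping.lookup mo v)"

definition subst_cp :: "('v \<Rightarrow> 'w cpoly) \<Rightarrow> 'v cpoly \<Rightarrow> 'w cpoly" where
  "subst_cp f p = (\<Sum>mo\<in>Poly_Mapping.keys p. Const (Poly_Mapping.lookup p mo) * mon_eval f mo)"

definition in_ideal :: "'v cpoly list \<Rightarrow> 'v cpoly \<Rightarrow> bool" where
  "in_ideal gs p \<longleftrightarrow> (\<exists>c. p = (\<Sum>i<length gs. c i * gs ! i))"

definition wdeg :: "('v \<Rightarrow> nat) \<Rightarrow> ('v \<Rightarrow>\<^sub>0 nat) \<Rightarrow> nat" where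
  "wdeg w m = (\<Sum>v\<in>Poly_Mapping.keys m. Poly_Mapping.lookup m v * w v)"

definition homog_part :: "('v \<Rightarrow> nat) \<Rightarrow> nat \<Rightarrow> 'v cpoly set" where
  "homog_part w d = {p. \<forall>m\<in>Poly_Mapping.keys p. wdeg w m = d}"

definition hilb_fun :: "('v \<Rightarrow> nat) \<Rightarrow> 'v cpoly list \<Rightarrow> nat \<Rightarrow> nat" where
  "hilb_fun w gs d =
     vector_space.dim smult_cp (homog_part w d)
     - vector_space.dim smult_cp (homog_part w d \<inter> {p. in_ideal gs p})"

datatype src = B | Sig1 | Rho | Sig2 | Tau | Sig3
datatype tgt = TB | Q1 | Q2 | Q3 | L1 | L2 | L3

fun src_wt :: "src \<Rightarrow> nat" where
  "src_wt B = 1" | "src_wt Sig1 = 1" | "src_wt Rho = 2" | "src_wt Sig2 = 2"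
| "src_wt Tau = 2" | "src_wt Sig3 = 3"

definition src_rels :: "src cpoly list" where
  "src_rels = [Var Tau ^ 2 - Var Rho * Var Sig2, Var Tau * Var Sig3, Var Rho * Var Sig3]"

definition tgt_rels :: "tgt cpoly list" where
  "tgt_rels = [Var Q1 * Var L1, Var Q2 * Var L2, Var Q3 * Var L3]"

fun phi :: "src \<Rightarrow> tgt cpoly" where
  "phi B = Var TB"
| "phi Sig1 = Var L1 + Var L2 + Var L3"
| "phi Rho = Var Q1 ^ 2 + Var Q2 ^ 2 + Var Q3 ^ 2
     - 2 * (Var Q1 * Var Q2 + Var Q1 * Var Q3 + Var Q2 * Var Q3)"
| "phi Sig2 = Var L1 ^ 2 + Var L2 ^ 2 + Var L3 ^ 2
     - 2 * (Var L1 * Var L2 + Var L1 * Var L3 + Var L2 * Var L3)"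
| "phi Tau = Var L1 * (Var Q3 - Var Q2) + Var L2 * (Var Q1 - Var Q3) + Var L3 * (Var Q2 - Var Q1)"
| "phi Sig3 = Var L1 * Var L2 * Var L3"

end

theory Submission
  imports Defs "HOL-Computational_Algebra.Fundamental_Theorem_Algebra"
begin

text \<open>Call a monomial of the source standard if its \<open>\<tau>\<close>-degree is at most one and it contains
  \<open>\<sigma>\<^sub>3\<close> only when it contains neither \<open>\<rho>\<close> nor \<open>\<tau>\<close>. The relations \<open>\<tau>\<^sup>2 = \<rho>\<sigma>\<^sub>2\<close>,
  \<open>\<tau>\<sigma>\<^sub>3 = \<rho>\<sigma>\<^sub>3 = 0\<close> rewrite every monomial into a combination of standard ones of the
  same degree. Conversely, no nonzero combination \<open>N\<close> of standard monomials is mapped into the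
  target ideal: composing \<open>\<phi>\<close> with the points of the zero set \<open>{q\<^sub>i\<ell>\<^sub>i = 0}\<close> one reaches
  every point with \<open>\<sigma>\<^sub>3 = 0\<close> and \<open>\<tau> = \<plusminus>\<surd>\<rho>\<surd>\<sigma>\<^sub>2\<close> (on the component
  \<open>q\<^sub>2 = q\<^sub>3 = \<ell>\<^sub>1 = 0\<close>) and every point with \<open>\<rho> = \<tau> = 0\<close> (on the component \<open>q = 0\<close>,
  taking for \<open>\<ell>\<^sub>1, \<ell>\<^sub>2, \<ell>\<^sub>3\<close> the roots of a cubic). Since monomials are linearly independent
  as functions on the torus, evaluating \<open>N\<close> at these points kills first its \<open>\<sigma>\<^sub>3\<close>-free part
  and then the rest. Hence \<open>\<phi>\<close> is injective modulo the ideals, the standard monomials form a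
  basis of the source, and its Hilbert series is their generating function
  \<open>((1 + u\<^sup>2)/(1 - u\<^sup>2) + u\<^sup>3/(1 - u\<^sup>3)) / ((1 - u)\<^sup>2 (1 - u\<^sup>2))\<close>.\<close>

lemma poly_mapping_sum_single:
  "p = (\<Sum>m\<in>Poly_Mapping.keys p. Poly_Mapping.single m (Poly_Mapping.lookup p m))"
proof (rule poly_mapping_eqI)
  fix k
  have "Poly_Mapping.lookup (\<Sum>m\<in>Poly_Mapping.keys p. Poly_Mapping.single m (Poly_Mapping.lookup p m)) k
      = (\<Sum>m\<in>Poly_Mapping.keys p. if m = k then Poly_Mapping.lookup p m else 0)"
    by (simp add: lookup_sum lookup_single when_def)
  also have "\<dots> = Poly_Mapping.lookup p k"
    by (simp add: sum.delta in_keys_iff)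
  finally show "Poly_Mapping.lookup p k
      = Poly_Mapping.lookup (\<Sum>m\<in>Poly_Mapping.keys p. Poly_Mapping.single m (Poly_Mapping.lookup p m)) k"
    by simp
qed

definition monomial_value :: "('v \<Rightarrow> 'b::comm_monoid_mult) \<Rightarrow> ('v \<Rightarrow>\<^sub>0 nat) \<Rightarrow> 'b" where
  "monomial_value x m = (\<Prod>v\<in>Poly_Mapping.keys m. x v ^ Poly_Mapping.lookup m v)"

lemma mon_eval_eq_monomial_value: "mon_eval f = monomial_value f"
  by (simp add: fun_eq_iff mon_eval_def monomial_value_def)

lemma monomial_value_superset:
  assumes "finite S" "Poly_Mapping.keys m \<subseteq> S"
  shows "monomial_value x m = (\<Prod>v\<in>S. x v ^ Poly_Mapping.lookup m v)"
  unfolding monomial_value_def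
  by (rule prod.mono_neutral_left) (use assms in \<open>auto simp: in_keys_iff\<close>)

lemma monomial_value_add: "monomial_value x (m + n) = monomial_value x m * monomial_value x n"
proof -
  let ?S = "Poly_Mapping.keys m \<union> Poly_Mapping.keys n"
  have "monomial_value x (m + n) = (\<Prod>v\<in>?S. x v ^ Poly_Mapping.lookup (m + n) v)"
    by (rule monomial_value_superset) (auto dest: keys_add[THEN subsetD])
  also have "\<dots> = (\<Prod>v\<in>?S. x v ^ Poly_Mapping.lookup m v * x v ^ Poly_Mapping.lookup n v)"
    by (simp add: lookup_add power_add)
  also have "\<dots> = monomial_value x m * monomial_value x n"
    by (simp add: prod.distrib monomial_value_superset[of ?S])
  finally show ?thesis .
qed

lemma monomial_value_zero [simp]: "monomial_value x 0 = 1"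
  by (simp add: monomial_value_def)

lemma monomial_value_single [simp]: "monomial_value x (Poly_Mapping.single v k) = x v ^ k"
  by (simp add: monomial_value_def)

lemma monomial_value_cong:
  assumes "\<And>v. v \<in> Poly_Mapping.keys m \<Longrightarrow> x v = y v"
  shows "monomial_value x m = monomial_value y m"
  unfolding monomial_value_def using assms by (intro prod.cong) auto

lemma monomial_value_eq_0:
  fixes x :: "'v \<Rightarrow> 'b::comm_semiring_1"
  assumes "v \<in> Poly_Mapping.keys m" "x v = 0"
  shows "monomial_value x m = 0"
  unfolding monomial_value_def using assms
  by (intro prod_zero bexI[of _ v]) (auto simp: in_keys_iff power_0_left)

text \<open>Both evaluation and substitution are instances of the following construction: a ring
  homomorphism on the coefficients together with a multiplicative map on the monomials.\<close>

locale poly_lift =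
  fixes h :: "complex \<Rightarrow> 'b::comm_ring_1" and g :: "('v \<Rightarrow>\<^sub>0 nat) \<Rightarrow> 'b"
  assumes h_0: "h 0 = 0" and h_1: "h 1 = 1"
    and h_add: "\<And>a b. h (a + b) = h a + h b" and h_mult: "\<And>a b. h (a * b) = h a * h b"
    and g_0: "g 0 = 1" and g_add: "\<And>m n. g (m + n) = g m * g n"
begin

definition lift :: "'v cpoly \<Rightarrow> 'b" where
  "lift p = (\<Sum>m\<in>Poly_Mapping.keys p. h (Poly_Mapping.lookup p m) * g m)"

lemma lift_superset:
  assumes "finite S" "Poly_Mapping.keys p \<subseteq> S"
  shows "lift p = (\<Sum>m\<in>S. h (Poly_Mapping.lookup p m) * g m)"
  unfolding lift_def
  by (rule sum.mono_neutral_left) (use assms in \<open>auto simp: in_keys_iff h_0\<close>)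

lemma lift_add: "lift (p + q) = lift p + lift q"
proof -
  let ?S = "Poly_Mapping.keys p \<union> Poly_Mapping.keys q"
  have "lift (p + q) = (\<Sum>m\<in>?S. h (Poly_Mapping.lookup (p + q) m) * g m)"
    by (rule lift_superset) (auto dest: keys_add[THEN subsetD])
  also have "\<dots> = (\<Sum>m\<in>?S. h (Poly_Mapping.lookup p m) * g m + h (Poly_Mapping.lookup q m) * g m)"
    by (simp add: lookup_add h_add algebra_simps)
  also have "\<dots> = lift p + lift q"
    by (simp add: sum.distrib lift_superset[of ?S])
  finally show ?thesis .
qed

lemma lift_zero: "lift 0 = 0"
  by (simp add: lift_def)

lemma lift_single: "lift (Poly_Mapping.single m a) = h a * g m"
  by (simp add: lift_def h_0)

lemma lift_sum: "lift (sum f I) = (\<Sum>i\<in>I. lift (f i))"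
  by (induction I rule: infinite_finite_induct) (simp_all add: lift_zero lift_add)

lemma lift_mult: "lift (p * q) = lift p * lift q"
proof -
  have "p * q = (\<Sum>m\<in>Poly_Mapping.keys p. Poly_Mapping.single m (Poly_Mapping.lookup p m))
      * (\<Sum>n\<in>Poly_Mapping.keys q. Poly_Mapping.single n (Poly_Mapping.lookup q n))"
    by (simp flip: poly_mapping_sum_single)
  also have "\<dots> = (\<Sum>m\<in>Poly_Mapping.keys p. \<Sum>n\<in>Poly_Mapping.keys q.
      Poly_Mapping.single (m + n) (Poly_Mapping.lookup p m * Poly_Mapping.lookup q n))"
    by (simp add: sum_product mult_single)
  finally have "lift (p * q) = (\<Sum>m\<in>Poly_Mapping.keys p. \<Sum>n\<in>Poly_Mapping.keys q.
      (h (Poly_Mapping.lookup p m) * g m) * (h (Poly_Mapping.lookup q n) * g n))"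
    by (simp add: lift_sum lift_single h_mult g_add algebra_simps)
  also have "\<dots> = lift p * lift q"
    by (simp add: lift_def sum_product)
  finally show ?thesis .
qed

lemma lift_uminus: "lift (- p) = - lift p"
  using lift_add[of p "- p"] by (simp add: lift_zero add_eq_0_iff2)

lemma lift_diff: "lift (p - q) = lift p - lift q"
  by (simp only: diff_conv_add_uminus lift_add lift_uminus)

lemma lift_one: "lift 1 = 1"
  by (simp flip: single_one add: lift_single h_1 g_0)

lemma lift_power: "lift (p ^ n) = lift p ^ n"
  by (induction n) (simp_all add: lift_one lift_mult)

lemma lift_prod: "lift (prod f I) = (\<Prod>i\<in>I. lift (f i))"
  by (induction I rule: infinite_finite_induct) (simp_all add: lift_one lift_mult)

end

lemma Const_add: "Const (a + b) = Const a + Const b"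
  by (simp add: Const_def single_add)

lemma Const_mult: "Const (a * b) = Const a * Const b"
  by (simp add: Const_def mult_single)

lemma Const_0 [simp]: "Const 0 = 0"
  by (simp add: Const_def)

lemma Const_1 [simp]: "Const 1 = 1"
  by (simp add: Const_def)

lemma Const_mult_single: "Const c * Poly_Mapping.single m 1 = Poly_Mapping.single m c"
  by (simp add: Const_def mult_single)

lemma lookup_Const_mult: "Poly_Mapping.lookup (Const c * p) m = c * Poly_Mapping.lookup p m"
  by (simp add: Const_def flip: mult_map_scale_conv_mult) (simp add: map.rep_eq when_def)

lemma keys_Const_mult: "Poly_Mapping.keys (Const c * p) \<subseteq> Poly_Mapping.keys p"
  by (auto simp: in_keys_iff lookup_Const_mult)

lemma poly_mapping_sum_Const_mult:
  "p = (\<Sum>m\<in>Poly_Mapping.keys p. Const (Poly_Mapping.lookup p m) * Poly_Mapping.single m 1)"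
  by (simp add: Const_mult_single flip: poly_mapping_sum_single)

lemma poly_lift_subst: "poly_lift Const (mon_eval f)"
  by unfold_locales
    (simp_all add: Const_add Const_mult mon_eval_eq_monomial_value monomial_value_add)

lemma subst_cp_eq_lift: "subst_cp f = poly_lift.lift Const (mon_eval f)"
  by (simp add: fun_eq_iff subst_cp_def poly_lift.lift_def[OF poly_lift_subst])

lemma subst_cp_add [simp]: "subst_cp f (p + q) = subst_cp f p + subst_cp f q"
  and subst_cp_mult [simp]: "subst_cp f (p * q) = subst_cp f p * subst_cp f q"
  and subst_cp_diff [simp]: "subst_cp f (p - q) = subst_cp f p - subst_cp f q"
  and subst_cp_power [simp]: "subst_cp f (p ^ n) = subst_cp f p ^ n"
  and subst_cp_sum: "subst_cp f (sum F I) = (\<Sum>i\<in>I. subst_cp f (F i))"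
  by (simp_all add: subst_cp_eq_lift poly_lift.lift_add[OF poly_lift_subst]
      poly_lift.lift_mult[OF poly_lift_subst] poly_lift.lift_diff[OF poly_lift_subst]
      poly_lift.lift_power[OF poly_lift_subst] poly_lift.lift_sum[OF poly_lift_subst])

lemma subst_cp_Var [simp]: "subst_cp f (Var v) = f v"
  by (simp add: subst_cp_def Var_def mon_eval_def)

definition eval_cp :: "('v \<Rightarrow> complex) \<Rightarrow> 'v cpoly \<Rightarrow> complex" where
  "eval_cp x p = (\<Sum>m\<in>Poly_Mapping.keys p. Poly_Mapping.lookup p m * monomial_value x m)"

lemma poly_lift_eval: "poly_lift (\<lambda>c. c) (monomial_value x)"
  by unfold_locales (simp_all add: monomial_value_add)

lemma eval_cp_eq_lift: "eval_cp x = poly_lift.lift (\<lambda>c. c) (monomial_value x)"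
  by (simp add: fun_eq_iff eval_cp_def poly_lift.lift_def[OF poly_lift_eval])

lemma eval_cp_add [simp]: "eval_cp x (p + q) = eval_cp x p + eval_cp x q"
  and eval_cp_mult [simp]: "eval_cp x (p * q) = eval_cp x p * eval_cp x q"
  and eval_cp_diff [simp]: "eval_cp x (p - q) = eval_cp x p - eval_cp x q"
  and eval_cp_power [simp]: "eval_cp x (p ^ n) = eval_cp x p ^ n"
  and eval_cp_one [simp]: "eval_cp x 1 = 1"
  and eval_cp_zero [simp]: "eval_cp x 0 = 0"
  and eval_cp_sum: "eval_cp x (sum f I) = (\<Sum>i\<in>I. eval_cp x (f i))"
  and eval_cp_prod: "eval_cp x (prod f I) = (\<Prod>i\<in>I. eval_cp x (f i))"
  by (simp_all add: eval_cp_eq_lift poly_lift.lift_add[OF poly_lift_eval]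
      poly_lift.lift_mult[OF poly_lift_eval] poly_lift.lift_diff[OF poly_lift_eval]
      poly_lift.lift_power[OF poly_lift_eval] poly_lift.lift_one[OF poly_lift_eval]
      poly_lift.lift_zero[OF poly_lift_eval] poly_lift.lift_sum[OF poly_lift_eval]
      poly_lift.lift_prod[OF poly_lift_eval])

lemma eval_cp_single [simp]: "eval_cp x (Poly_Mapping.single m c) = c * monomial_value x m"
  by (simp add: eval_cp_eq_lift poly_lift.lift_single[OF poly_lift_eval])

lemma eval_cp_Var [simp]: "eval_cp x (Var v) = x v"
  by (simp add: Var_def)

lemma eval_cp_Const [simp]: "eval_cp x (Const c) = c"
  by (simp add: Const_def)

lemma eval_cp_numeral [simp]: "eval_cp x (numeral n) = numeral n"
proof -
  have "eval_cp x (of_nat k) = of_nat k" for k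
    by (induction k) simp_all
  then show ?thesis
    by (metis of_nat_numeral)
qed

lemma eval_subst_cp: "eval_cp x (subst_cp f p) = eval_cp (\<lambda>v. eval_cp x (f v)) p"
  by (simp add: subst_cp_def eval_cp_sum eval_cp_prod mon_eval_def monomial_value_def
      eval_cp_def[of _ p])

section \<open>Identity theorem on the torus\<close>

lemma sum_powers_eq_0_on_nonzero:
  fixes c :: "'i \<Rightarrow> 'a::{idom,real_normed_div_algebra}"
  assumes "finite K" and vanish: "\<And>z. z \<noteq> 0 \<Longrightarrow> (\<Sum>i\<in>K. c i * z ^ e i) = 0"
  shows "(\<Sum>i\<in>{i\<in>K. e i = k}. c i) = 0"
proof -
  define n where "n = Max (e ` K)"
  define a where "a j = (\<Sum>i\<in>{i\<in>K. e i = j}. c i)" for j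
  have e_le_n: "e i \<le> n" if "i \<in> K" for i
    unfolding n_def using assms(1) that by simp
  have poly: "(\<Sum>i\<in>K. c i * z ^ e i) = (\<Sum>j\<le>n. a j * z ^ j)" for z
  proof -
    have "(\<Sum>i\<in>K. c i * z ^ e i) = (\<Sum>j\<le>n. \<Sum>i\<in>{i\<in>K. e i = j}. c i * z ^ e i)"
      by (rule sum.group[symmetric]) (use assms(1) e_le_n in auto)
    then show ?thesis
      by (simp add: a_def sum_distrib_right)
  qed
  have "UNIV - {0} \<subseteq> {z. (\<Sum>j\<le>n. a j * z ^ j) = 0}"
    using vanish by (auto simp: poly)
  moreover have "infinite (UNIV - {0 :: 'a})"
    by (simp add: infinite_UNIV_char_0)
  ultimately have "infinite {z. (\<Sum>j\<le>n. a j * z ^ j) = 0}"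
    using finite_subset by blast
  then have "\<forall>j\<le>n. a j = 0"
    using polyfun_finite_roots[of a n] by blast
  moreover have "a k = 0" if "k > n"
  proof -
    have "{i\<in>K. e i = k} = {}" using e_le_n that by force
    then show ?thesis unfolding a_def by (simp only: sum.empty)
  qed
  ultimately show ?thesis
    unfolding a_def by (meson not_le)
qed

lemma single_lookup_split:
  fixes m :: "'v \<Rightarrow>\<^sub>0 nat"
  shows "m = (m - Poly_Mapping.single w (Poly_Mapping.lookup m w))
    + Poly_Mapping.single w (Poly_Mapping.lookup m w)"
  by (rule poly_mapping_eqI) (simp add: lookup_add lookup_minus lookup_single when_def)

lemma keys_minus_single_lookup:
  fixes m :: "'v \<Rightarrow>\<^sub>0 nat"
  shows "Poly_Mapping.keys (m - Poly_Mapping.single w (Poly_Mapping.lookup m w)) = Poly_Mapping.keys m - {w}"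
  by (auto simp: in_keys_iff lookup_minus lookup_single when_def split: if_splits)

lemma monomial_value_fun_upd:
  "monomial_value (x(w := z)) m
    = monomial_value x (m - Poly_Mapping.single w (Poly_Mapping.lookup m w)) * z ^ Poly_Mapping.lookup m w"
proof -
  let ?m' = "m - Poly_Mapping.single w (Poly_Mapping.lookup m w)"
  have "monomial_value (x(w := z)) ?m' = monomial_value x ?m'"
    by (rule monomial_value_cong) (simp add: keys_minus_single_lookup)
  then show ?thesis
    by (subst single_lookup_split[of m w]) (simp add: monomial_value_add)
qed

text \<open>With the other coordinates frozen, a sum of monomials is a polynomial in \<open>x w\<close>, so its
  layers of fixed degree in \<open>w\<close> vanish separately.\<close>

lemma torus_vanishing_layer:
  fixes c :: "'i \<Rightarrow> 'a::{idom,real_normed_div_algebra}" and g :: "'i \<Rightarrow> ('v \<Rightarrow>\<^sub>0 nat)"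
  assumes "finite K"
    and vanish: "\<And>x. \<forall>v. x v \<noteq> 0 \<Longrightarrow> (\<Sum>i\<in>K. c i * monomial_value x (g i)) = 0"
    and torus: "\<forall>v. x v \<noteq> 0"
  shows "(\<Sum>i\<in>{i\<in>K. Poly_Mapping.lookup (g i) w = k}.
      c i * monomial_value x (g i - Poly_Mapping.single w (Poly_Mapping.lookup (g i) w))) = 0"
proof (rule sum_powers_eq_0_on_nonzero[OF assms(1)])
  fix z :: 'a assume "z \<noteq> 0"
  then have "(\<Sum>i\<in>K. c i * monomial_value (x(w := z)) (g i)) = 0"
    using torus by (intro vanish) simp
  then show "(\<Sum>i\<in>K. c i * monomial_value x (g i - Poly_Mapping.single w (Poly_Mapping.lookup (g i) w))
      * z ^ Poly_Mapping.lookup (g i) w) = 0"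
    by (simp add: monomial_value_fun_upd mult.assoc)
qed

lemma monomials_independent_on_torus_aux:
  fixes c :: "'i \<Rightarrow> 'a::{idom,real_normed_div_algebra}" and g :: "'i \<Rightarrow> ('v \<Rightarrow>\<^sub>0 nat)"
  assumes "finite V"
  shows "finite K \<Longrightarrow> inj_on g K \<Longrightarrow> (\<forall>i\<in>K. Poly_Mapping.keys (g i) \<subseteq> V) \<Longrightarrow>
    (\<forall>x. (\<forall>v. x v \<noteq> 0) \<longrightarrow> (\<Sum>i\<in>K. c i * monomial_value x (g i)) = 0) \<Longrightarrow>
    \<forall>i\<in>K. c i = 0"
  using assms
proof (induction V arbitrary: K g rule: finite_induct)
  case empty
  show ?case
  proof
    fix i assume "i \<in> K"
    have g_0: "g j = 0" if "j \<in> K" for j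
      using empty.prems(3) that by auto
    then have "K = {i}"
      using empty.prems(2) \<open>i \<in> K\<close> by (auto simp: inj_on_def)
    then show "c i = 0"
      using empty.prems(4) g_0 \<open>i \<in> K\<close> by (auto elim: allE[of _ "\<lambda>_. 1"])
  qed
next
  case (insert w V)
  define e where "e i = Poly_Mapping.lookup (g i) w" for i
  define g' where "g' i = g i - Poly_Mapping.single w (e i)" for i
  show ?case
  proof
    fix i assume "i \<in> K"
    let ?K = "{j\<in>K. e j = e i}"
    have "inj_on g' ?K"
      using insert.prems(2) single_lookup_split[of "g _" w]
      by (auto simp: inj_on_def g'_def e_def) metis
    moreover have "\<forall>j\<in>?K. Poly_Mapping.keys (g' j) \<subseteq> V"
    proof
      fix j assume "j \<in> ?K"
      have "Poly_Mapping.keys (g' j) = Poly_Mapping.keys (g j) - {w}"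
        unfolding g'_def e_def by (rule keys_minus_single_lookup)
      then show "Poly_Mapping.keys (g' j) \<subseteq> V"
        using insert.prems(3) \<open>j \<in> ?K\<close> by blast
    qed
    moreover have "\<forall>x. (\<forall>v. x v \<noteq> 0) \<longrightarrow> (\<Sum>j\<in>?K. c j * monomial_value x (g' j)) = 0"
      unfolding g'_def e_def
      by (intro allI impI torus_vanishing_layer[OF insert.prems(1)]) (use insert.prems(4) in auto)
    ultimately have "\<forall>j\<in>?K. c j = 0"
      using insert.IH[of ?K g'] insert.prems(1) by auto
    then show "c i = 0"
      using \<open>i \<in> K\<close> by auto
  qed
qed

theorem monomials_independent_on_torus:
  fixes c :: "'i \<Rightarrow> 'a::{idom,real_normed_div_algebra}" and g :: "'i \<Rightarrow> ('v \<Rightarrow>\<^sub>0 nat)"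
  assumes "finite K" "inj_on g K"
    and "\<And>x. \<forall>v. x v \<noteq> 0 \<Longrightarrow> (\<Sum>i\<in>K. c i * monomial_value x (g i)) = 0"
    and "i \<in> K"
  shows "c i = 0"
  using monomials_independent_on_torus_aux[of "\<Union>i\<in>K. Poly_Mapping.keys (g i)" K g c] assms
  by auto

lemma poly_eq_0_if_vanishes_on_torus:
  assumes "\<And>x. \<forall>v. x v \<noteq> 0 \<Longrightarrow> eval_cp x p = 0"
  shows "p = 0"
proof -
  have "Poly_Mapping.lookup p m = 0" if "m \<in> Poly_Mapping.keys p" for m
    by (rule monomials_independent_on_torus[of "Poly_Mapping.keys p" id])
      (use assms that in \<open>simp_all add: eval_cp_def\<close>)
  then show ?thesis
    by (metis in_keys_iff lookup_zero poly_mapping_eqI)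
qed

lemma in_ideal_zero: "in_ideal gs 0"
  unfolding in_ideal_def by (rule exI[of _ "\<lambda>_. 0"]) simp

lemma in_ideal_add: "in_ideal gs p \<Longrightarrow> in_ideal gs q \<Longrightarrow> in_ideal gs (p + q)"
  unfolding in_ideal_def
proof (elim exE)
  fix c d assume "p = (\<Sum>i<length gs. c i * gs ! i)" "q = (\<Sum>i<length gs. d i * gs ! i)"
  then have "p + q = (\<Sum>i<length gs. (c i + d i) * gs ! i)"
    by (simp add: sum.distrib distrib_right)
  then show "\<exists>c. p + q = (\<Sum>i<length gs. c i * gs ! i)"
    by (rule exI[of _ "\<lambda>i. c i + d i"])
qed

lemma in_ideal_mult: "in_ideal gs p \<Longrightarrow> in_ideal gs (r * p)"
  unfolding in_ideal_def
proof (elim exE)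
  fix c assume "p = (\<Sum>i<length gs. c i * gs ! i)"
  then have "r * p = (\<Sum>i<length gs. (r * c i) * gs ! i)"
    by (simp add: sum_distrib_left mult.assoc)
  then show "\<exists>c. r * p = (\<Sum>i<length gs. c i * gs ! i)"
    by (rule exI[of _ "\<lambda>i. r * c i"])
qed

lemma in_ideal_sum: "(\<And>i. i \<in> I \<Longrightarrow> in_ideal gs (f i)) \<Longrightarrow> in_ideal gs (sum f I)"
  by (induction I rule: infinite_finite_induct) (simp_all add: in_ideal_zero in_ideal_add)

lemma in_ideal_3I:
  assumes "p = x * a + y * b + z * c"
  shows "in_ideal [a, b, c] p"
proof -
  have "p = (\<Sum>i<length [a, b, c]. [x, y, z] ! i * [a, b, c] ! i)"
    using assms by (simp add: lessThan_nat_numeral numeral_2_eq_2)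
  then show ?thesis
    unfolding in_ideal_def by (rule exI[of _ "\<lambda>i. [x, y, z] ! i"])
qed

lemma subst_cp_in_ideal:
  assumes "in_ideal gs p" and gens: "\<And>g. g \<in> set gs \<Longrightarrow> in_ideal hs (subst_cp f g)"
  shows "in_ideal hs (subst_cp f p)"
proof -
  obtain c where "p = (\<Sum>i<length gs. c i * gs ! i)"
    using assms(1) unfolding in_ideal_def by blast
  then have "subst_cp f p = (\<Sum>i<length gs. subst_cp f (c i) * subst_cp f (gs ! i))"
    by (simp add: subst_cp_sum)
  also have "in_ideal hs \<dots>"
    by (intro in_ideal_sum in_ideal_mult gens) simp
  finally show ?thesis .
qed

definition zero_set :: "'v cpoly list \<Rightarrow> ('v \<Rightarrow> complex) set" where
  "zero_set gs = {x. \<forall>g\<in>set gs. eval_cp x g = 0}"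

lemma eval_cp_eq_0_if_in_ideal:
  assumes "in_ideal gs p" "x \<in> zero_set gs"
  shows "eval_cp x p = 0"
proof -
  obtain c where "p = (\<Sum>i<length gs. c i * gs ! i)"
    using assms(1) unfolding in_ideal_def by blast
  then show ?thesis
    using assms(2) by (simp add: eval_cp_sum zero_set_def)
qed

lemma subst_phi_src_rels_in_tgt_ideal:
  assumes "g \<in> set src_rels"
  shows "in_ideal tgt_rels (subst_cp phi g)"
proof -
  have "in_ideal tgt_rels (phi Tau ^ 2 - phi Rho * phi Sig2)"
    unfolding tgt_rels_def
    by (rule in_ideal_3I[where
          x = "- 6 * Var Q3 * Var L3 - 2 * Var Q3 * Var L2 + 2 * Var Q3 * Var L1
            - 2 * Var Q2 * Var L3 - 6 * Var Q2 * Var L2 + 2 * Var Q2 * Var L1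
            + 2 * Var Q1 * Var L3 + 2 * Var Q1 * Var L2 - Var Q1 * Var L1" and
          y = "- 6 * Var Q3 * Var L3 + 2 * Var Q3 * Var L2 - 2 * Var Q3 * Var L1
            + 2 * Var Q2 * Var L3 - Var Q2 * Var L2 + 2 * Var Q2 * Var L1
            - 2 * Var Q1 * Var L3 + 2 * Var Q1 * Var L2" and
          z = "- Var Q3 * Var L3 + 2 * Var Q3 * Var L2 + 2 * Var Q3 * Var L1
            + 2 * Var Q2 * Var L3 - 2 * Var Q2 * Var L1 + 2 * Var Q1 * Var L3
            - 2 * Var Q1 * Var L2"])
      (simp add: algebra_simps power2_eq_square)
  moreover have "in_ideal tgt_rels (phi Tau * phi Sig3)"
    unfolding tgt_rels_def
    by (rule in_ideal_3I[where
          x = "- Var L2 * Var L3 ^ 2 + Var L2 ^ 2 * Var L3" and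
          y = "Var L1 * Var L3 ^ 2 - Var L1 ^ 2 * Var L3" and
          z = "- Var L1 * Var L2 ^ 2 + Var L1 ^ 2 * Var L2"])
      (simp add: algebra_simps power2_eq_square)
  moreover have "in_ideal tgt_rels (phi Rho * phi Sig3)"
    unfolding tgt_rels_def
    by (rule in_ideal_3I[where
          x = "- 2 * Var Q3 * Var L2 * Var L3 - 2 * Var Q2 * Var L2 * Var L3
            + Var Q1 * Var L2 * Var L3" and
          y = "- 2 * Var Q3 * Var L1 * Var L3 + Var Q2 * Var L1 * Var L3" and
          z = "Var Q3 * Var L1 * Var L2"])
      (simp add: algebra_simps power2_eq_square)
  ultimately show ?thesis
    using assms by (auto simp: src_rels_def)
qed

lemma subst_phi_in_tgt_ideal:
  "in_ideal src_rels P \<Longrightarrow> in_ideal tgt_rels (subst_cp phi P)"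
  using subst_cp_in_ideal subst_phi_src_rels_in_tgt_ideal by blast

lemma zero_set_tgt_rels_iff:
  "y \<in> zero_set tgt_rels \<longleftrightarrow> y Q1 * y L1 = 0 \<and> y Q2 * y L2 = 0 \<and> y Q3 * y L3 = 0"
  by (simp add: zero_set_def tgt_rels_def)

definition phi_map :: "(tgt \<Rightarrow> complex) \<Rightarrow> src \<Rightarrow> complex" where
  "phi_map y v = eval_cp y (phi v)"

lemma eval_subst_phi: "eval_cp y (subst_cp phi P) = eval_cp (phi_map y) P"
  by (simp add: eval_subst_cp phi_map_def[abs_def])

lemma complex_cubic_vieta:
  fixes s e\<^sub>2 e\<^sub>3 :: complex
  obtains l\<^sub>1 l\<^sub>2 l\<^sub>3
  where "l\<^sub>1 + l\<^sub>2 + l\<^sub>3 = s" "l\<^sub>1 * l\<^sub>2 + l\<^sub>1 * l\<^sub>3 + l\<^sub>2 * l\<^sub>3 = e\<^sub>2" "l\<^sub>1 * l\<^sub>2 * l\<^sub>3 = e\<^sub>3"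
proof -
  obtain l\<^sub>1 where root: "poly [:- e\<^sub>3, e\<^sub>2, - s, 1:] l\<^sub>1 = 0"
    using fundamental_theorem_of_algebra_alt[of "[:- e\<^sub>3, e\<^sub>2, - s, 1:]"] by auto
  define S where "S = s - l\<^sub>1"
  define P where "P = e\<^sub>2 - l\<^sub>1 * S"
  define r where "r = csqrt (S\<^sup>2 - 4 * P)"
  define l\<^sub>2 where "l\<^sub>2 = (S + r) / 2"
  define l\<^sub>3 where "l\<^sub>3 = (S - r) / 2"
  have sum: "l\<^sub>2 + l\<^sub>3 = S"
    by (simp add: l\<^sub>2_def l\<^sub>3_def field_simps)
  have "l\<^sub>2 * l\<^sub>3 = (S\<^sup>2 - r\<^sup>2) / 4"
    by (simp add: l\<^sub>2_def l\<^sub>3_def field_simps power2_eq_square)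
  then have prod: "l\<^sub>2 * l\<^sub>3 = P"
    by (simp add: r_def)
  show thesis
  proof
    show "l\<^sub>1 + l\<^sub>2 + l\<^sub>3 = s"
      using sum by (simp add: S_def add.assoc)
    show "l\<^sub>1 * l\<^sub>2 + l\<^sub>1 * l\<^sub>3 + l\<^sub>2 * l\<^sub>3 = e\<^sub>2"
    proof -
      have "l\<^sub>1 * l\<^sub>2 + l\<^sub>1 * l\<^sub>3 + l\<^sub>2 * l\<^sub>3 = l\<^sub>1 * (l\<^sub>2 + l\<^sub>3) + l\<^sub>2 * l\<^sub>3"
        by (simp add: distrib_left)
      then show ?thesis
        using sum prod by (simp add: P_def)
    qed
    have "l\<^sub>1 * l\<^sub>2 * l\<^sub>3 = l\<^sub>1 * P"
      using prod by (simp add: mult.assoc)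
    also have "\<dots> = l\<^sub>1 * (e\<^sub>2 + l\<^sub>1 * (- s + l\<^sub>1))"
      by (simp add: P_def S_def algebra_simps)
    also have "\<dots> = e\<^sub>3"
      using root by (simp add: neg_eq_iff_add_eq_0[symmetric])
    finally show "l\<^sub>1 * l\<^sub>2 * l\<^sub>3 = e\<^sub>3" .
  qed
qed

text \<open>On the component \<open>q\<^sub>2 = q\<^sub>3 = \<ell>\<^sub>1 = 0\<close> of the zero set the image of \<open>\<phi>\<close> is
  \<open>{\<tau>\<^sup>2 = \<rho>\<sigma>\<^sub>2, \<sigma>\<^sub>3 = 0}\<close>, on the component \<open>q\<^sub>1 = q\<^sub>2 = q\<^sub>3 = 0\<close> it is \<open>{\<rho> = \<tau> = 0}\<close>.\<close>

lemma phi_map_onto_sig3_zero: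
  assumes "q\<^sup>2 = x Rho" "d\<^sup>2 = x Sig2"
  obtains y where "y \<in> zero_set tgt_rels" "phi_map y = x(Tau := q * d, Sig3 := 0)"
proof
  define y where "y v = (case v of TB \<Rightarrow> x B | Q1 \<Rightarrow> q | Q2 \<Rightarrow> 0 | Q3 \<Rightarrow> 0
     | L1 \<Rightarrow> 0 | L2 \<Rightarrow> (x Sig1 + d) / 2 | L3 \<Rightarrow> (x Sig1 - d) / 2)" for v
  show "y \<in> zero_set tgt_rels"
    by (simp add: zero_set_tgt_rels_iff y_def)
  show "phi_map y = x(Tau := q * d, Sig3 := 0)"
  proof
    fix v show "phi_map y v = (x(Tau := q * d, Sig3 := 0)) v"
      using assms by (cases v) (simp_all add: phi_map_def y_def field_simps power2_eq_square)
  qed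
qed

lemma phi_map_onto_rho_tau_zero:
  obtains y where "y \<in> zero_set tgt_rels" "phi_map y = x(Rho := 0, Tau := 0)"
proof -
  obtain l\<^sub>1 l\<^sub>2 l\<^sub>3 where l: "l\<^sub>1 + l\<^sub>2 + l\<^sub>3 = x Sig1"
    "l\<^sub>1 * l\<^sub>2 + l\<^sub>1 * l\<^sub>3 + l\<^sub>2 * l\<^sub>3 = ((x Sig1)\<^sup>2 - x Sig2) / 4" "l\<^sub>1 * l\<^sub>2 * l\<^sub>3 = x Sig3"
    by (rule complex_cubic_vieta)
  define y where "y v = (case v of TB \<Rightarrow> x B | Q1 \<Rightarrow> 0 | Q2 \<Rightarrow> 0 | Q3 \<Rightarrow> 0
     | L1 \<Rightarrow> l\<^sub>1 | L2 \<Rightarrow> l\<^sub>2 | L3 \<Rightarrow> l\<^sub>3)" for v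
  have "y \<in> zero_set tgt_rels"
    by (simp add: zero_set_tgt_rels_iff y_def)
  moreover have "phi_map y v = (x(Rho := 0, Tau := 0)) v" for v
  proof (cases v)
    case Sig2
    have "l\<^sub>1\<^sup>2 + l\<^sub>2\<^sup>2 + l\<^sub>3\<^sup>2 - 2 * (l\<^sub>1 * l\<^sub>2 + l\<^sub>1 * l\<^sub>3 + l\<^sub>2 * l\<^sub>3)
        = (l\<^sub>1 + l\<^sub>2 + l\<^sub>3)\<^sup>2 - 4 * (l\<^sub>1 * l\<^sub>2 + l\<^sub>1 * l\<^sub>3 + l\<^sub>2 * l\<^sub>3)"
      by (simp add: power2_eq_square algebra_simps)
    also have "\<dots> = x Sig2"
    proof -
      have "4 * (l\<^sub>1 * l\<^sub>2 + l\<^sub>1 * l\<^sub>3 + l\<^sub>2 * l\<^sub>3) = (x Sig1)\<^sup>2 - x Sig2"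
        using l(2) by (simp add: algebra_simps)
      then show ?thesis
        using l(1) by simp
    qed
    finally show ?thesis
      using Sig2 by (simp add: phi_map_def y_def)
  qed (use l in \<open>simp_all add: phi_map_def y_def\<close>)
  ultimately show thesis
    using that by blast
qed

section \<open>Standard monomials and the normal form\<close>

lemma UNIV_src: "(UNIV :: src set) = {B, Sig1, Rho, Sig2, Tau, Sig3}"
  by (auto intro: src.exhaust)

lemma wdeg_src_wt:
  "wdeg src_wt m = Poly_Mapping.lookup m B + Poly_Mapping.lookup m Sig1 + 2 * Poly_Mapping.lookup m Rho
    + 2 * Poly_Mapping.lookup m Sig2 + 2 * Poly_Mapping.lookup m Tau + 3 * Poly_Mapping.lookup m Sig3"
proof -
  have "wdeg src_wt m = (\<Sum>v\<in>UNIV. Poly_Mapping.lookup m v * src_wt v)"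
    unfolding wdeg_def by (rule sum.mono_neutral_left) (auto simp: in_keys_iff, simp add: UNIV_src)
  then show ?thesis
    by (simp add: UNIV_src)
qed

definition standard_mon :: "(src \<Rightarrow>\<^sub>0 nat) \<Rightarrow> bool" where
  "standard_mon m \<longleftrightarrow> Poly_Mapping.lookup m Tau \<le> 1 \<and>
     (Poly_Mapping.lookup m Sig3 \<noteq> 0 \<longrightarrow> Poly_Mapping.lookup m Rho = 0 \<and> Poly_Mapping.lookup m Tau = 0)"

text \<open>Normal form of a monomial modulo the relations, by the rewrite rules \<open>\<tau>\<^sup>2 \<mapsto> \<rho>\<sigma>\<^sub>2\<close>,
  \<open>\<tau>\<sigma>\<^sub>3 \<mapsto> 0\<close> and \<open>\<rho>\<sigma>\<^sub>3 \<mapsto> 0\<close>.\<close>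

definition reduce_mon :: "(src \<Rightarrow>\<^sub>0 nat) \<Rightarrow> src cpoly" where
  "reduce_mon m =
    (if standard_mon m then Poly_Mapping.single m 1
     else if Poly_Mapping.lookup m Sig3 \<noteq> 0 then 0
     else let k = Poly_Mapping.lookup m Tau div 2 in
       Poly_Mapping.single (m - Poly_Mapping.single Tau (2 * k)
         + Poly_Mapping.single Rho k + Poly_Mapping.single Sig2 k) 1)"

lemma reduce_mon_standard: "standard_mon m \<Longrightarrow> reduce_mon m = Poly_Mapping.single m 1"
  by (simp add: reduce_mon_def)

lemma keys_reduce_mon:
  "Poly_Mapping.keys (reduce_mon m) \<subseteq> {m'. standard_mon m' \<and> wdeg src_wt m' = wdeg src_wt m}"
proof (cases "standard_mon m \<or> Poly_Mapping.lookup m Sig3 \<noteq> 0")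
  case True
  then show ?thesis by (auto simp: reduce_mon_def)
next
  case False
  define k where "k = Poly_Mapping.lookup m Tau div 2"
  define m' where "m' = m - Poly_Mapping.single Tau (2 * k)
    + Poly_Mapping.single Rho k + Poly_Mapping.single Sig2 k"
  have "2 * k \<le> Poly_Mapping.lookup m Tau"
    by (simp add: k_def)
  then have "wdeg src_wt m' = wdeg src_wt m"
    by (simp add: wdeg_src_wt m'_def lookup_add lookup_minus lookup_single)
  moreover have "standard_mon m'"
    using False by (simp add: m'_def standard_mon_def lookup_add lookup_minus lookup_single k_def)
  ultimately show ?thesis
    using False by (simp add: reduce_mon_def m'_def k_def Let_def)
qed

lemma single_Var_power: "Poly_Mapping.single (Poly_Mapping.single v k) (1::complex) = Var v ^ k"
proof (induction k)
  case (Suc k)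
  have "Poly_Mapping.single (Poly_Mapping.single v (Suc k)) (1::complex)
      = Poly_Mapping.single (Poly_Mapping.single v 1 + Poly_Mapping.single v k) 1"
    by (simp flip: single_add)
  also have "\<dots> = Var v * Poly_Mapping.single (Poly_Mapping.single v k) 1"
    by (simp add: Var_def mult_single)
  finally show ?case
    using Suc.IH by simp
qed simp

lemma single_split_Var_power:
  assumes "k \<le> Poly_Mapping.lookup m v"
  shows "Poly_Mapping.single m (1::complex)
    = Poly_Mapping.single (m - Poly_Mapping.single v k) 1 * Var v ^ k"
proof -
  have "m = (m - Poly_Mapping.single v k) + Poly_Mapping.single v k"
    using assms by (intro poly_mapping_eqI) (auto simp: lookup_add lookup_minus lookup_single when_def)
  then show ?thesis
    by (metis mult_single mult_1 single_Var_power)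
qed

lemma reduce_mon_in_ideal: "in_ideal src_rels (Poly_Mapping.single m 1 - reduce_mon m)"
proof -
  let ?l = "Poly_Mapping.lookup m"
  consider "standard_mon m" | "?l Sig3 \<noteq> 0" "?l Tau \<noteq> 0" | "?l Sig3 \<noteq> 0" "?l Rho \<noteq> 0"
    | "\<not> standard_mon m" "?l Sig3 = 0"
    by (force simp: standard_mon_def)
  then show ?thesis
  proof cases
    case 1
    then show ?thesis by (simp add: reduce_mon_def in_ideal_zero)
  next
    case 2
    define m\<^sub>1 where "m\<^sub>1 = m - Poly_Mapping.single Sig3 1 - Poly_Mapping.single Tau 1"
    have "Poly_Mapping.single m 1 = Poly_Mapping.single m\<^sub>1 1 * (Var Tau * Var Sig3)"
      using 2 single_split_Var_power[of 1 m Sig3]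
        single_split_Var_power[of 1 "m - Poly_Mapping.single Sig3 1" Tau]
      by (simp add: m\<^sub>1_def lookup_minus lookup_single mult_ac)
    moreover have "reduce_mon m = 0"
      using 2 by (simp add: reduce_mon_def standard_mon_def)
    ultimately show ?thesis
      unfolding src_rels_def by (intro in_ideal_3I[where x = 0 and y = "Poly_Mapping.single m\<^sub>1 1" and z = 0]) simp
  next
    case 3
    define m\<^sub>1 where "m\<^sub>1 = m - Poly_Mapping.single Sig3 1 - Poly_Mapping.single Rho 1"
    have "Poly_Mapping.single m 1 = Poly_Mapping.single m\<^sub>1 1 * (Var Rho * Var Sig3)"
      using 3 single_split_Var_power[of 1 m Sig3]
        single_split_Var_power[of 1 "m - Poly_Mapping.single Sig3 1" Rho]
      by (simp add: m\<^sub>1_def lookup_minus lookup_single mult_ac)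
    moreover have "reduce_mon m = 0"
      using 3 by (simp add: reduce_mon_def standard_mon_def)
    ultimately show ?thesis
      unfolding src_rels_def by (intro in_ideal_3I[where x = 0 and y = 0 and z = "Poly_Mapping.single m\<^sub>1 1"]) simp
  next
    case 4
    define k where "k = ?l Tau div 2"
    define m\<^sub>0 where "m\<^sub>0 = m - Poly_Mapping.single Tau (2 * k)"
    have "Poly_Mapping.single m 1 = Poly_Mapping.single m\<^sub>0 1 * (Var Tau ^ 2) ^ k"
      using single_split_Var_power[of "2 * k" m Tau] by (simp add: m\<^sub>0_def k_def power_mult)
    moreover have "reduce_mon m = Poly_Mapping.single m\<^sub>0 1 * (Var Rho * Var Sig2) ^ k"
      using 4 by (simp add: reduce_mon_def m\<^sub>0_def k_def Let_def mult_single power_mult_distrib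
          add.assoc flip: single_Var_power)
    moreover obtain S where "(Var Tau ^ 2) ^ k - (Var Rho * Var Sig2) ^ k
        = ((Var Tau ^ 2 :: src cpoly) - Var Rho * Var Sig2) * S"
      using power_diff_sumr2 by blast
    ultimately have "Poly_Mapping.single m 1 - reduce_mon m
        = (Poly_Mapping.single m\<^sub>0 1 * S) * (Var Tau ^ 2 - Var Rho * Var Sig2)"
      by (simp add: right_diff_distrib[symmetric] mult_ac)
    then show ?thesis
      unfolding src_rels_def by (intro in_ideal_3I[where y = 0 and z = 0]) simp
  qed
qed

definition normal_form :: "src cpoly \<Rightarrow> src cpoly" where
  "normal_form P = (\<Sum>m\<in>Poly_Mapping.keys P. Const (Poly_Mapping.lookup P m) * reduce_mon m)"

lemma keys_normal_form:
  "Poly_Mapping.keys (normal_form P)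
    \<subseteq> {m'. standard_mon m' \<and> (\<exists>m\<in>Poly_Mapping.keys P. wdeg src_wt m' = wdeg src_wt m)}"
proof -
  have "Poly_Mapping.keys (normal_form P)
      \<subseteq> (\<Union>m\<in>Poly_Mapping.keys P. Poly_Mapping.keys (Const (Poly_Mapping.lookup P m) * reduce_mon m))"
    unfolding normal_form_def by (rule keys_sum)
  also have "\<dots> \<subseteq> (\<Union>m\<in>Poly_Mapping.keys P. Poly_Mapping.keys (reduce_mon m))"
    using keys_Const_mult by blast
  also have "\<dots> \<subseteq> {m'. standard_mon m' \<and> (\<exists>m\<in>Poly_Mapping.keys P. wdeg src_wt m' = wdeg src_wt m)}"
    using keys_reduce_mon by blast
  finally show ?thesis .
qed

lemma normal_form_diff_eq:
  "P - normal_form P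
    = (\<Sum>m\<in>Poly_Mapping.keys P. Const (Poly_Mapping.lookup P m) * (Poly_Mapping.single m 1 - reduce_mon m))"
  by (subst (1) poly_mapping_sum_Const_mult)
    (simp add: normal_form_def right_diff_distrib sum_subtractf)

lemma normal_form_diff_in_ideal: "in_ideal src_rels (P - normal_form P)"
  unfolding normal_form_diff_eq by (intro in_ideal_sum in_ideal_mult reduce_mon_in_ideal)

section \<open>Injectivity\<close>

locale standard_vanishing =
  fixes N :: "src cpoly"
  assumes standard: "\<And>m. m \<in> Poly_Mapping.keys N \<Longrightarrow> standard_mon m"
    and vanishes: "\<And>y. y \<in> zero_set tgt_rels \<Longrightarrow> eval_cp (phi_map y) N = 0"
begin

definition sig3_free_keys :: "nat \<Rightarrow> (src \<Rightarrow>\<^sub>0 nat) set" where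
  "sig3_free_keys j =
    {m \<in> Poly_Mapping.keys N. Poly_Mapping.lookup m Tau = j \<and> Poly_Mapping.lookup m Sig3 = 0}"

lemma finite_sig3_free_keys: "finite (sig3_free_keys j)"
  by (simp add: sig3_free_keys_def)

lemma sig3_free_keys_1_split:
  "m \<in> sig3_free_keys 1 \<Longrightarrow> m = (m - Poly_Mapping.single Tau 1) + Poly_Mapping.single Tau 1"
  by (intro poly_mapping_eqI)
    (auto simp: sig3_free_keys_def lookup_add lookup_minus lookup_single when_def)

lemma eval_at_Sig3_zero:
  "eval_cp (x(Tau := t, Sig3 := 0)) N
    = (\<Sum>m\<in>sig3_free_keys 0. Poly_Mapping.lookup N m * monomial_value x m)
      + t * (\<Sum>m\<in>sig3_free_keys 1.
               Poly_Mapping.lookup N m * monomial_value x (m - Poly_Mapping.single Tau 1))"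
proof -
  let ?z = "x(Tau := t, Sig3 := 0)"
  let ?term = "\<lambda>m. Poly_Mapping.lookup N m * monomial_value ?z m"
  have "{m \<in> Poly_Mapping.keys N. Poly_Mapping.lookup m Sig3 = 0} = sig3_free_keys 0 \<union> sig3_free_keys 1"
    using standard by (force simp: sig3_free_keys_def standard_mon_def le_Suc_eq)
  moreover have "eval_cp ?z N = (\<Sum>m\<in>{m \<in> Poly_Mapping.keys N. Poly_Mapping.lookup m Sig3 = 0}. ?term m)"
    unfolding eval_cp_def
    by (rule sum.mono_neutral_right) (auto intro: monomial_value_eq_0[of Sig3] simp: in_keys_iff)
  ultimately have "eval_cp ?z N = (\<Sum>m\<in>sig3_free_keys 0. ?term m) + (\<Sum>m\<in>sig3_free_keys 1. ?term m)"
    by (simp add: sum.union_disjoint finite_sig3_free_keys sig3_free_keys_def disjoint_iff)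
  also have "(\<Sum>m\<in>sig3_free_keys 0. ?term m)
      = (\<Sum>m\<in>sig3_free_keys 0. Poly_Mapping.lookup N m * monomial_value x m)"
    by (rule sum.cong) (auto intro!: monomial_value_cong simp: sig3_free_keys_def in_keys_iff)
  also have "(\<Sum>m\<in>sig3_free_keys 1. ?term m)
      = t * (\<Sum>m\<in>sig3_free_keys 1.
               Poly_Mapping.lookup N m * monomial_value x (m - Poly_Mapping.single Tau 1))"
    unfolding sum_distrib_left
  proof (rule sum.cong)
    fix m assume m: "m \<in> sig3_free_keys 1"
    let ?m' = "m - Poly_Mapping.single Tau 1"
    have "monomial_value ?z m = monomial_value ?z ?m' * monomial_value ?z (Poly_Mapping.single Tau 1)"
      using sig3_free_keys_1_split[OF m] by (metis monomial_value_add)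
    moreover have "monomial_value ?z ?m' = monomial_value x ?m'"
      using m by (intro monomial_value_cong) (auto simp: sig3_free_keys_def in_keys_iff lookup_minus)
    ultimately show "?term m = t * (Poly_Mapping.lookup N m * monomial_value x ?m')"
      by simp
  qed simp
  finally show ?thesis .
qed

text \<open>Both square roots \<open>\<plusminus>\<surd>\<rho>\<close> give points of the image with the same \<open>\<rho>, \<sigma>\<^sub>2\<close>, so the
  \<open>\<tau>\<close>-free and the \<open>\<tau>\<close>-linear part vanish separately.\<close>

lemma sig3_free_sums_vanish:
  assumes torus: "\<forall>v. x v \<noteq> 0"
  shows "(\<Sum>m\<in>sig3_free_keys 0. Poly_Mapping.lookup N m * monomial_value x m) = 0"
    and "(\<Sum>m\<in>sig3_free_keys 1.
           Poly_Mapping.lookup N m * monomial_value x (m - Poly_Mapping.single Tau 1)) = 0"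
proof -
  define A where "A = (\<Sum>m\<in>sig3_free_keys 0. Poly_Mapping.lookup N m * monomial_value x m)"
  define B where "B = (\<Sum>m\<in>sig3_free_keys 1.
           Poly_Mapping.lookup N m * monomial_value x (m - Poly_Mapping.single Tau 1))"
  define q where "q = csqrt (x Rho)"
  define d where "d = csqrt (x Sig2)"
  have "A + (s * q * d) * B = 0" if "s\<^sup>2 = 1" for s
  proof -
    have "(s * q)\<^sup>2 = x Rho" "d\<^sup>2 = x Sig2"
      using that by (simp_all add: q_def d_def power_mult_distrib)
    then obtain y where y: "y \<in> zero_set tgt_rels" "phi_map y = x(Tau := s * q * d, Sig3 := 0)"
      by (rule phi_map_onto_sig3_zero)
    have "eval_cp (x(Tau := s * q * d, Sig3 := 0)) N = 0"
      using vanishes[OF y(1)] y(2) by simp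
    then show ?thesis
      by (simp only: eval_at_Sig3_zero A_def B_def)
  qed
  from this[of 1] this[of "- 1"] have "A = 0" "(q * d) * B = 0"
    by (simp_all add: algebra_simps)
  moreover have "q * d \<noteq> 0"
    using torus by (simp add: q_def d_def)
  ultimately show "A = 0" "B = 0"
    unfolding A_def B_def by simp_all
qed

lemma keys_Sig3_nonzero:
  assumes "m \<in> Poly_Mapping.keys N"
  shows "Poly_Mapping.lookup m Sig3 \<noteq> 0"
proof
  assume "Poly_Mapping.lookup m Sig3 = 0"
  then have m_free: "m \<in> sig3_free_keys (Poly_Mapping.lookup m Tau)"
    and Tau_le: "Poly_Mapping.lookup m Tau \<le> 1"
    using assms standard by (auto simp: sig3_free_keys_def standard_mon_def)
  have inj: "inj_on (\<lambda>m. m - Poly_Mapping.single Tau 1) (sig3_free_keys 1)"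
    by (rule inj_onI) (metis sig3_free_keys_1_split)
  consider "Poly_Mapping.lookup m Tau = 0" | "Poly_Mapping.lookup m Tau = 1"
    using Tau_le by linarith
  then have "Poly_Mapping.lookup N m = 0"
  proof cases
    case 1
    show ?thesis
      by (rule monomials_independent_on_torus[of "sig3_free_keys 0" id])
        (use m_free 1 sig3_free_sums_vanish(1) in \<open>auto simp: finite_sig3_free_keys\<close>)
  next
    case 2
    show ?thesis
      by (rule monomials_independent_on_torus[of "sig3_free_keys 1" "\<lambda>m. m - Poly_Mapping.single Tau 1"])
        (use m_free 2 inj sig3_free_sums_vanish(2) in \<open>auto simp: finite_sig3_free_keys\<close>)
  qed
  then show False
    using assms by (simp add: in_keys_iff)
qed

lemma eq_0: "N = 0"
proof (rule poly_eq_0_if_vanishes_on_torus)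
  fix x :: "src \<Rightarrow> complex"
  obtain y where y: "y \<in> zero_set tgt_rels" "phi_map y = x(Rho := 0, Tau := 0)"
    by (rule phi_map_onto_rho_tau_zero)
  have "eval_cp x N = eval_cp (x(Rho := 0, Tau := 0)) N"
    unfolding eval_cp_def
  proof (intro sum.cong refl arg_cong[where f = "(*) _"] monomial_value_cong)
    fix m v assume "m \<in> Poly_Mapping.keys N" "v \<in> Poly_Mapping.keys m"
    then show "x v = (x(Rho := 0, Tau := 0)) v"
      using standard keys_Sig3_nonzero by (auto simp: standard_mon_def in_keys_iff)
  qed
  also have "\<dots> = 0"
    using vanishes y by metis
  finally show "eval_cp x N = 0" .
qed

end

lemma normal_form_eq_0_if_subst_in_tgt_ideal:
  assumes "in_ideal tgt_rels (subst_cp phi P)"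
  shows "normal_form P = 0"
proof (rule standard_vanishing.eq_0, unfold_locales)
  show "standard_mon m" if "m \<in> Poly_Mapping.keys (normal_form P)" for m
    using keys_normal_form that by blast
  fix y assume y: "y \<in> zero_set tgt_rels"
  have "eval_cp (phi_map y) P = 0"
    using eval_cp_eq_0_if_in_ideal[OF assms y] by (simp add: eval_subst_phi)
  moreover have "eval_cp (phi_map y) (P - normal_form P) = 0"
    using eval_cp_eq_0_if_in_ideal[OF subst_phi_in_tgt_ideal[OF normal_form_diff_in_ideal] y]
    by (simp add: eval_subst_phi)
  ultimately show "eval_cp (phi_map y) (normal_form P) = 0"
    by simp
qed

theorem subst_phi_in_tgt_ideal_iff:
  "in_ideal tgt_rels (subst_cp phi P) \<longleftrightarrow> in_ideal src_rels P"
  using subst_phi_in_tgt_ideal normal_form_eq_0_if_subst_in_tgt_ideal normal_form_diff_in_ideal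
  by (metis diff_zero)

section \<open>The Hilbert function counts standard monomials\<close>

lemma vector_space_smult_cp: "vector_space (smult_cp :: complex \<Rightarrow> 'v cpoly \<Rightarrow> 'v cpoly)"
  by unfold_locales
    (simp_all add: smult_cp_def distrib_left distrib_right Const_add Const_mult mult.assoc)

lemma module_smult_cp: "module (smult_cp :: complex \<Rightarrow> 'v cpoly \<Rightarrow> 'v cpoly)"
  using vector_space_smult_cp by (simp add: module_iff_vector_space)

lemma independent_if_pivots:
  fixes f :: "'i \<Rightarrow> 'v cpoly"
  assumes pivot: "\<And>i. i \<in> I \<Longrightarrow> Poly_Mapping.lookup (f i) (\<mu> i) = 1"
    and off_pivot: "\<And>i j. i \<in> I \<Longrightarrow> j \<in> I \<Longrightarrow> j \<noteq> i \<Longrightarrow> Poly_Mapping.lookup (f j) (\<mu> i) = 0"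
  shows "\<not> module.dependent smult_cp (f ` I)" "inj_on f I"
proof -
  show "inj_on f I"
    by (rule inj_onI) (metis pivot off_pivot zero_neq_one)
  show "\<not> module.dependent smult_cp (f ` I)"
  proof
    assume "module.dependent smult_cp (f ` I)"
    then obtain t u p where t: "finite t" "t \<subseteq> f ` I" "(\<Sum>v\<in>t. smult_cp (u v) v) = 0"
      and p: "p \<in> t" "u p \<noteq> 0"
      unfolding module.dependent_explicit[OF module_smult_cp] by blast
    obtain i where i: "i \<in> I" "p = f i"
      using t p by blast
    have "0 = Poly_Mapping.lookup (\<Sum>v\<in>t. smult_cp (u v) v) (\<mu> i)"
      using t by simp
    also have "\<dots> = (\<Sum>v\<in>t. u v * Poly_Mapping.lookup v (\<mu> i))"
      by (simp add: lookup_sum smult_cp_def lookup_Const_mult)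
    also have "\<dots> = u p * Poly_Mapping.lookup p (\<mu> i)"
    proof (rule sum.remove[OF t(1) p(1), THEN trans], simp, rule sum.neutral, rule ballI)
      fix v assume "v \<in> t - {p}"
      then obtain j where "j \<in> I" "v = f j" "j \<noteq> i"
        using t i by blast
      then show "u v * Poly_Mapping.lookup v (\<mu> i) = 0"
        using off_pivot i by simp
    qed
    finally show False
      using pivot i p by simp
  qed
qed

lemma dim_homog_part: "vector_space.dim smult_cp (homog_part w d) = card {m. wdeg w m = d}"
proof (rule vector_space.dim_unique[OF vector_space_smult_cp])
  let ?M = "{m. wdeg w m = d}"
  let ?f = "\<lambda>m. Poly_Mapping.single m (1::complex)"
  show "?f ` ?M \<subseteq> homog_part w d"
    by (auto simp: homog_part_def)
  show "homog_part w d \<subseteq> module.span smult_cp (?f ` ?M)"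
  proof
    fix p assume p: "p \<in> homog_part w d"
    have "p = (\<Sum>m\<in>Poly_Mapping.keys p. smult_cp (Poly_Mapping.lookup p m) (?f m))"
      unfolding smult_cp_def by (rule poly_mapping_sum_Const_mult)
    also have "\<dots> \<in> module.span smult_cp (?f ` ?M)"
      using p by (intro module.span_sum[OF module_smult_cp] module.span_scale[OF module_smult_cp]
          module.span_base[OF module_smult_cp]) (auto simp: homog_part_def)
    finally show "p \<in> module.span smult_cp (?f ` ?M)" .
  qed
  have "\<not> module.dependent smult_cp (?f ` ?M)" "inj_on ?f ?M"
    by (rule independent_if_pivots[of ?M ?f "\<lambda>m. m"], simp_all add: lookup_single)+
  then show "\<not> module.dependent smult_cp (?f ` ?M)" "card (?f ` ?M) = card ?M"
    by (simp_all add: card_image)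
qed

lemma normal_form_eq_0_if_in_ideal: "in_ideal src_rels P \<Longrightarrow> normal_form P = 0"
  by (intro normal_form_eq_0_if_subst_in_tgt_ideal subst_phi_in_tgt_ideal)

text \<open>The elements \<open>m - reduce_mon m\<close> for non-standard \<open>m\<close> form a basis of the relations.\<close>

lemma dim_homog_part_ideal:
  "vector_space.dim smult_cp (homog_part src_wt d \<inter> {p. in_ideal src_rels p})
    = card {m. wdeg src_wt m = d \<and> \<not> standard_mon m}"
proof (rule vector_space.dim_unique[OF vector_space_smult_cp])
  let ?M = "{m. wdeg src_wt m = d \<and> \<not> standard_mon m}"
  let ?f = "\<lambda>m. Poly_Mapping.single m (1::complex) - reduce_mon m"
  show "?f ` ?M \<subseteq> homog_part src_wt d \<inter> {p. in_ideal src_rels p}"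
  proof (intro image_subsetI IntI CollectI)
    fix m assume m: "m \<in> ?M"
    have "Poly_Mapping.keys (?f m) \<subseteq> {m} \<union> Poly_Mapping.keys (reduce_mon m)"
      using keys_diff[of "Poly_Mapping.single m 1" "reduce_mon m"] by simp
    then show "?f m \<in> homog_part src_wt d"
      using keys_reduce_mon[of m] m by (auto simp: homog_part_def)
    show "in_ideal src_rels (?f m)"
      by (rule reduce_mon_in_ideal)
  qed
  show "homog_part src_wt d \<inter> {p. in_ideal src_rels p} \<subseteq> module.span smult_cp (?f ` ?M)"
  proof
    fix p assume p: "p \<in> homog_part src_wt d \<inter> {p. in_ideal src_rels p}"
    then have "p = p - normal_form p"
      by (simp add: normal_form_eq_0_if_in_ideal)
    also have "\<dots> = (\<Sum>m\<in>Poly_Mapping.keys p. smult_cp (Poly_Mapping.lookup p m) (?f m))"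
      by (simp add: normal_form_diff_eq smult_cp_def)
    also have "\<dots> \<in> module.span smult_cp (?f ` ?M)"
    proof (intro module.span_sum[OF module_smult_cp] module.span_scale[OF module_smult_cp])
      fix m assume "m \<in> Poly_Mapping.keys p"
      then have "wdeg src_wt m = d"
        using p by (auto simp: homog_part_def)
      then show "?f m \<in> module.span smult_cp (?f ` ?M)"
        by (cases "standard_mon m")
          (simp_all add: reduce_mon_standard module.span_zero[OF module_smult_cp]
            module.span_base[OF module_smult_cp])
    qed
    finally show "p \<in> module.span smult_cp (?f ` ?M)" .
  qed
  have lookup_reduce_mon: "Poly_Mapping.lookup (reduce_mon m') m = 0" if "\<not> standard_mon m" for m m'
    using keys_reduce_mon[of m'] that by (auto simp: in_keys_iff)
  have "\<not> module.dependent smult_cp (?f ` ?M)" "inj_on ?f ?M"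
    by (rule independent_if_pivots[of ?M ?f "\<lambda>m. m"],
        simp_all add: lookup_single lookup_minus lookup_reduce_mon)+
  then show "\<not> module.dependent smult_cp (?f ` ?M)" "card (?f ` ?M) = card ?M"
    by (simp_all add: card_image)
qed

definition src_mon :: "nat \<Rightarrow> nat \<Rightarrow> nat \<Rightarrow> nat \<Rightarrow> nat \<Rightarrow> nat \<Rightarrow> (src \<Rightarrow>\<^sub>0 nat)" where
  "src_mon a b c d e f = Poly_Mapping.single B a + Poly_Mapping.single Sig1 b
    + Poly_Mapping.single Rho c + Poly_Mapping.single Sig2 d + Poly_Mapping.single Tau e
    + Poly_Mapping.single Sig3 f"

lemma lookup_src_mon [simp]:
  "Poly_Mapping.lookup (src_mon a b c d e f) B = a"
  "Poly_Mapping.lookup (src_mon a b c d e f) Sig1 = b"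
  "Poly_Mapping.lookup (src_mon a b c d e f) Rho = c"
  "Poly_Mapping.lookup (src_mon a b c d e f) Sig2 = d"
  "Poly_Mapping.lookup (src_mon a b c d e f) Tau = e"
  "Poly_Mapping.lookup (src_mon a b c d e f) Sig3 = f"
  by (simp_all add: src_mon_def lookup_add lookup_single)

lemma src_mon_lookup:
  "m = src_mon (Poly_Mapping.lookup m B) (Poly_Mapping.lookup m Sig1) (Poly_Mapping.lookup m Rho)
    (Poly_Mapping.lookup m Sig2) (Poly_Mapping.lookup m Tau) (Poly_Mapping.lookup m Sig3)"
  by (rule poly_mapping_eqI, case_tac k) simp_all

lemma src_mon_eq_iff:
  "src_mon a b c d e f = src_mon a' b' c' d' e' f'
    \<longleftrightarrow> a = a' \<and> b = b' \<and> c = c' \<and> d = d' \<and> e = e' \<and> f = f'"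
  by (metis lookup_src_mon)

lemma finite_wdeg_src_wt_level: "finite {m. wdeg src_wt m = d}"
proof (rule finite_subset)
  let ?A = "{..d} \<times> {..d} \<times> {..d} \<times> {..d} \<times> {..d} \<times> {..d}"
  show "{m. wdeg src_wt m = d} \<subseteq> (\<lambda>(a, b, c, e, f, g). src_mon a b c e f g) ` ?A"
  proof
    fix m assume "m \<in> {m. wdeg src_wt m = d}"
    then have "(Poly_Mapping.lookup m B, Poly_Mapping.lookup m Sig1, Poly_Mapping.lookup m Rho,
        Poly_Mapping.lookup m Sig2, Poly_Mapping.lookup m Tau, Poly_Mapping.lookup m Sig3) \<in> ?A"
      by (simp add: wdeg_src_wt)
    then show "m \<in> (\<lambda>(a, b, c, e, f, g). src_mon a b c e f g) ` ?A"
      by (rule rev_image_eqI) (simp flip: src_mon_lookup)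
  qed
qed simp

lemma hilb_fun_eq_card_standard:
  "hilb_fun src_wt src_rels d = card {m. standard_mon m \<and> wdeg src_wt m = d}"
proof -
  have "hilb_fun src_wt src_rels d
      = card {m. wdeg src_wt m = d} - card {m. wdeg src_wt m = d \<and> \<not> standard_mon m}"
    by (simp add: hilb_fun_def dim_homog_part dim_homog_part_ideal)
  also have "\<dots> = card ({m. wdeg src_wt m = d} - {m. wdeg src_wt m = d \<and> \<not> standard_mon m})"
    by (rule card_Diff_subset[symmetric]) (auto intro: finite_subset[OF _ finite_wdeg_src_wt_level])
  also have "{m. wdeg src_wt m = d} - {m. wdeg src_wt m = d \<and> \<not> standard_mon m}
      = {m. standard_mon m \<and> wdeg src_wt m = d}"
    by auto
  finally show ?thesis .
qed

section \<open>Generating functions of graded sets\<close>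

definition finite_levels :: "'a set \<Rightarrow> ('a \<Rightarrow> nat) \<Rightarrow> bool" where
  "finite_levels S w \<longleftrightarrow> (\<forall>d. finite {x\<in>S. w x = d})"

definition counting_fps :: "'a set \<Rightarrow> ('a \<Rightarrow> nat) \<Rightarrow> 'r::comm_ring_1 fps" where
  "counting_fps S w = Abs_fps (\<lambda>d. of_nat (card {x\<in>S. w x = d}))"

lemma finite_levels_finite: "finite S \<Longrightarrow> finite_levels S w"
  by (simp add: finite_levels_def)

lemma finite_levels_mult:
  assumes "0 < k"
  shows "finite_levels S (\<lambda>n::nat. k * n)"
  unfolding finite_levels_def
proof
  fix d
  have "{n\<in>S. k * n = d} \<subseteq> {..d}"
    using assms by auto
  then show "finite {n\<in>S. k * n = d}"
    by (rule finite_subset) simp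
qed

lemma finite_levels_id: "finite_levels S (\<lambda>n::nat. n)"
  using finite_levels_mult[of 1] by simp

lemma counting_fps_image:
  assumes "inj_on f S"
  shows "counting_fps (f ` S) w = counting_fps S (\<lambda>x. w (f x))"
proof -
  have "{y\<in>f ` S. w y = d} = f ` {x\<in>S. w (f x) = d}" for d
    by auto
  moreover have "inj_on f {x\<in>S. w (f x) = d}" for d
    using assms by (rule inj_on_subset) auto
  ultimately show ?thesis
    by (simp add: counting_fps_def card_image)
qed

lemma counting_fps_Un:
  assumes "S \<inter> T = {}" "finite_levels S w" "finite_levels T w"
  shows "counting_fps (S \<union> T) w = counting_fps S w + counting_fps T w"
proof -
  have "{x\<in>S \<union> T. w x = d} = {x\<in>S. w x = d} \<union> {x\<in>T. w x = d}" for d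
    by auto
  then show ?thesis
    using assms by (simp add: counting_fps_def finite_levels_def fps_eq_iff card_Un_disjoint
        disjoint_iff)
qed

lemma counting_fps_singleton: "counting_fps {x} w = (fps_X ^ w x :: 'r::comm_ring_1 fps)"
proof (rule fps_ext)
  fix d
  have "{y\<in>{x}. w y = d} = (if w x = d then {x} else {})"
    by auto
  then show "fps_nth (counting_fps {x} w) d = fps_nth (fps_X ^ w x :: 'r fps) d"
    by (simp add: counting_fps_def fps_X_power_iff)
qed

lemma counting_fps_shift:
  "counting_fps S (\<lambda>x. c + w x) = (fps_X ^ c * counting_fps S w :: 'r::comm_ring_1 fps)"
proof (rule fps_ext)
  fix d
  have "{x\<in>S. c + w x = d} = (if d < c then {} else {x\<in>S. w x = d - c})"
    by auto
  then show "fps_nth (counting_fps S (\<lambda>x. c + w x)) d = fps_nth (fps_X ^ c * counting_fps S w :: 'r fps) d"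
    by (simp add: counting_fps_def fps_X_power_mult_nth)
qed

lemma level_Times:
  fixes u :: "'a \<Rightarrow> nat" and v :: "'b \<Rightarrow> nat"
  shows "{p\<in>S \<times> T. (\<lambda>(x, y). u x + v y) p = d}
    = (\<Union>k\<le>d. {x\<in>S. u x = k} \<times> {y\<in>T. v y = d - k})"
proof
  show "{p\<in>S \<times> T. (\<lambda>(x, y). u x + v y) p = d}
      \<subseteq> (\<Union>k\<le>d. {x\<in>S. u x = k} \<times> {y\<in>T. v y = d - k})"
  proof
    fix p assume "p \<in> {p\<in>S \<times> T. (\<lambda>(x, y). u x + v y) p = d}"
    then show "p \<in> (\<Union>k\<le>d. {x\<in>S. u x = k} \<times> {y\<in>T. v y = d - k})"
      by (intro UN_I[of "u (fst p)"]) (auto simp: mem_Times_iff case_prod_beta)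
  qed
qed auto

lemma finite_levels_Times:
  assumes "finite_levels S u" "finite_levels T v"
  shows "finite_levels (S \<times> T) (\<lambda>(x, y). u x + v y)"
  using assms unfolding finite_levels_def level_Times by auto

lemma counting_fps_Times:
  assumes "finite_levels S u" "finite_levels T v"
  shows "counting_fps (S \<times> T) (\<lambda>(x, y). u x + v y)
    = (counting_fps S u * counting_fps T v :: 'r::comm_ring_1 fps)"
proof (rule fps_ext)
  fix d
  let ?A = "\<lambda>k. {x\<in>S. u x = k}" and ?B = "\<lambda>k. {y\<in>T. v y = d - k}"
  have "card {p\<in>S \<times> T. (\<lambda>(x, y). u x + v y) p = d} = (\<Sum>k\<le>d. card (?A k \<times> ?B k))"
    unfolding level_Times using assms unfolding finite_levels_def by (intro card_UN_disjoint) auto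
  also have "\<dots> = (\<Sum>k=0..d. card (?A k) * card (?B k))"
    by (simp add: card_cartesian_product atLeast0AtMost)
  finally show "fps_nth (counting_fps (S \<times> T) (\<lambda>(x, y). u x + v y)) d
      = fps_nth (counting_fps S u * counting_fps T v :: 'r fps) d"
    by (simp only: counting_fps_def fps_mult_nth fps_nth_Abs_fps of_nat_sum of_nat_mult)
qed

lemma finite_levels_Un: "finite_levels S w \<Longrightarrow> finite_levels T w \<Longrightarrow> finite_levels (S \<union> T) w"
  unfolding finite_levels_def by (simp add: Collect_disj_eq conj_disj_distribR)

lemma finite_levels_image: "finite_levels S (\<lambda>x. w (f x)) \<Longrightarrow> finite_levels (f ` S) w"
proof -
  have "{y\<in>f ` S. w y = d} = f ` {x\<in>S. w (f x) = d}" for d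
    by auto
  then show "finite_levels S (\<lambda>x. w (f x)) \<Longrightarrow> finite_levels (f ` S) w"
    by (simp add: finite_levels_def)
qed

lemma finite_levels_Plus:
  assumes "finite_levels S u" "finite_levels T v"
  shows "finite_levels (S <+> T) (case_sum u v)"
  unfolding Plus_def using assms by (intro finite_levels_Un finite_levels_image) simp_all

lemma counting_fps_Plus:
  assumes "finite_levels S u" "finite_levels T v"
  shows "counting_fps (S <+> T) (case_sum u v) = counting_fps S u + counting_fps T v"
proof -
  have "counting_fps (S <+> T) (case_sum u v)
      = counting_fps (Inl ` S) (case_sum u v) + counting_fps (Inr ` T) (case_sum u v)"
    unfolding Plus_def using assms
    by (intro counting_fps_Un finite_levels_image) auto
  then show ?thesis
    by (simp add: counting_fps_image)
qed

lemma counting_fps_atLeast_1: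
  "counting_fps {1::nat..} (\<lambda>n. k * n) = (fps_X ^ k * counting_fps UNIV (\<lambda>n. k * n) :: 'r::comm_ring_1 fps)"
proof -
  have "{1::nat..} = Suc ` UNIV"
    by (simp add: atLeast_Suc_greaterThan greaterThan_0)
  then have "counting_fps {1::nat..} (\<lambda>n. k * n) = (counting_fps UNIV (\<lambda>n. k * Suc n) :: 'r fps)"
    by (simp only: counting_fps_image inj_Suc)
  also have "\<dots> = counting_fps UNIV (\<lambda>n. k + k * n)"
    by simp
  also have "\<dots> = fps_X ^ k * counting_fps UNIV (\<lambda>n. k * n)"
    by (rule counting_fps_shift)
  finally show ?thesis .
qed

lemma counting_fps_multiples:
  assumes "0 < k"
  shows "counting_fps UNIV (\<lambda>n::nat. k * n) * (1 - fps_X ^ k) = (1 :: 'r::comm_ring_1 fps)"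
proof -
  let ?G = "counting_fps UNIV (\<lambda>n::nat. k * n) :: 'r::comm_ring_1 fps"
  have "counting_fps ({0} \<union> {1::nat..}) (\<lambda>n. k * n)
      = counting_fps {0} (\<lambda>n. k * n) + (counting_fps {1..} (\<lambda>n. k * n) :: 'r fps)"
    by (rule counting_fps_Un) (auto intro: finite_levels_finite finite_levels_mult[OF assms])
  moreover have "{0} \<union> {1::nat..} = UNIV"
    by auto
  ultimately have "?G = counting_fps {0} (\<lambda>n. k * n) + counting_fps {1..} (\<lambda>n. k * n)"
    by simp
  also have "\<dots> = 1 + fps_X ^ k * ?G"
    unfolding counting_fps_atLeast_1 by (simp add: counting_fps_singleton)
  finally show ?thesis
    by (simp add: algebra_simps)
qed

lemma counting_fps_01: "counting_fps {0, 1::nat} (\<lambda>n. k * n) = (1 + fps_X ^ k :: 'r::comm_ring_1 fps)"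
proof -
  have split: "{0, 1::nat} = {0} \<union> {1}"
    by auto
  have "counting_fps {0, 1::nat} (\<lambda>n. k * n)
      = counting_fps {0} (\<lambda>n. k * n) + (counting_fps {1} (\<lambda>n. k * n) :: 'r fps)"
    unfolding split by (rule counting_fps_Un) (simp_all add: finite_levels_finite)
  also have "\<dots> = 1 + fps_X ^ k"
    by (simp add: counting_fps_singleton)
  finally show ?thesis .
qed

text \<open>A standard monomial is \<open>b\<^sup>a \<sigma>\<^sub>1\<^sup>b\<close> times either \<open>\<rho>\<^sup>c \<sigma>\<^sub>2\<^sup>d \<tau>\<^sup>e\<close> with \<open>e \<le> 1\<close>,
  or \<open>\<sigma>\<^sub>2\<^sup>d \<sigma>\<^sub>3\<^sup>f\<close> with \<open>f \<ge> 1\<close>.\<close>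

definition standard_index :: "(nat \<times> nat \<times> ((nat \<times> nat \<times> nat) + (nat \<times> nat))) set" where
  "standard_index = UNIV \<times> UNIV \<times> ((UNIV \<times> UNIV \<times> {0, 1}) <+> (UNIV \<times> {1..}))"

definition standard_of_index :: "nat \<times> nat \<times> ((nat \<times> nat \<times> nat) + (nat \<times> nat)) \<Rightarrow> (src \<Rightarrow>\<^sub>0 nat)" where
  "standard_of_index =
    (\<lambda>(a, b, s). case s of Inl (c, d, e) \<Rightarrow> src_mon a b c d e 0 | Inr (d, f) \<Rightarrow> src_mon a b 0 d 0 f)"

text \<open>The weight of \<open>standard_of_index\<close>, written so that its nesting mirrors the
  product/sum structure of \<open>standard_index\<close> and the rules \<open>counting_fps_Times\<close> and
  \<open>counting_fps_Plus\<close> apply by simplification.\<close>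

definition index_wt :: "nat \<times> nat \<times> ((nat \<times> nat \<times> nat) + (nat \<times> nat)) \<Rightarrow> nat" where
  "index_wt =
    (\<lambda>(a, r). a + (\<lambda>(b, s). b +
      case_sum (\<lambda>(c, t). 2 * c + (\<lambda>(d, e). 2 * d + 2 * e) t) (\<lambda>(d, f). 2 * d + 3 * f) s) r)"

lemma bij_betw_standard_of_index: "bij_betw standard_of_index standard_index {m. standard_mon m}"
proof (rule bij_betw_imageI)
  show "inj_on standard_of_index standard_index"
  proof (rule inj_onI)
    fix x y assume "x \<in> standard_index" "y \<in> standard_index" "standard_of_index x = standard_of_index y"
    moreover obtain a b s where "x = (a, b, s)"
      by (cases x) auto
    moreover obtain a' b' s' where "y = (a', b', s')"
      by (cases y) auto
    ultimately show "x = y"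
      by (cases s; cases s') (auto simp: standard_of_index_def standard_index_def src_mon_eq_iff)
  qed
  show "standard_of_index ` standard_index = {m. standard_mon m}"
  proof (intro equalityI subsetI)
    fix m assume "m \<in> standard_of_index ` standard_index"
    then obtain a b s where "(a, b, s) \<in> standard_index" "m = standard_of_index (a, b, s)"
      by auto
    then show "m \<in> {m. standard_mon m}"
      by (cases s) (auto simp: standard_of_index_def standard_index_def standard_mon_def)
  next
    fix m assume "m \<in> {m. standard_mon m}"
    then have std: "standard_mon m" by simp
    let ?l = "Poly_Mapping.lookup m"
    show "m \<in> standard_of_index ` standard_index"
    proof (cases "?l Sig3 = 0")
      case True
      then have "m = standard_of_index (?l B, ?l Sig1, Inl (?l Rho, ?l Sig2, ?l Tau))"
        by (subst src_mon_lookup) (simp add: standard_of_index_def)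
      moreover have "(?l B, ?l Sig1, Inl (?l Rho, ?l Sig2, ?l Tau)) \<in> standard_index"
        using std by (auto simp: standard_index_def standard_mon_def)
      ultimately show ?thesis
        by blast
    next
      case False
      then have "m = standard_of_index (?l B, ?l Sig1, Inr (?l Sig2, ?l Sig3))"
        using std by (subst src_mon_lookup) (simp add: standard_of_index_def standard_mon_def)
      moreover have "(?l B, ?l Sig1, Inr (?l Sig2, ?l Sig3)) \<in> standard_index"
        using False by (auto simp: standard_index_def)
      ultimately show ?thesis
        by blast
    qed
  qed
qed

lemma wdeg_standard_of_index: "wdeg src_wt (standard_of_index x) = index_wt x"
  by (auto simp: standard_of_index_def index_wt_def wdeg_src_wt split: prod.splits sum.splits)

lemma counting_fps_standard_index:
  "counting_fps standard_index index_wt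
    = (counting_fps UNIV (\<lambda>n. n) * (counting_fps UNIV (\<lambda>n. n)
        * (counting_fps UNIV (\<lambda>n. 2 * n) * (counting_fps UNIV (\<lambda>n. 2 * n) * (1 + fps_X ^ 2))
           + counting_fps UNIV (\<lambda>n. 2 * n) * (fps_X ^ 3 * counting_fps UNIV (\<lambda>n. 3 * n))))
      :: 'r::comm_ring_1 fps)"
  unfolding standard_index_def index_wt_def
  by (simp add: counting_fps_Times counting_fps_Plus counting_fps_01 counting_fps_atLeast_1
      finite_levels_Times finite_levels_Plus finite_levels_id finite_levels_mult del: One_nat_def)

lemma hilbert_series_identity:
  fixes x g\<^sub>1 g\<^sub>2 g\<^sub>3 :: "'a::idom"
  assumes "g\<^sub>1 * (1 - x) = 1" "g\<^sub>2 * (1 - x ^ 2) = 1" "g\<^sub>3 * (1 - x ^ 3) = 1"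
  shows "g\<^sub>1 * (g\<^sub>1 * (g\<^sub>2 * (g\<^sub>2 * (1 + x ^ 2)) + g\<^sub>2 * (x ^ 3 * g\<^sub>3)))
      * ((1 - x) * (1 - x ^ 2) ^ 2 * (1 - x ^ 3))
    = 1 + x + 2 * x ^ 2 + 2 * x ^ 3 + 2 * x ^ 4"
  using assms by algebra

lemma counting_fps_standard_mon:
  "counting_fps {m. standard_mon m} (wdeg src_wt)
    = (1 + fps_X + 2 * fps_X ^ 2 + 2 * fps_X ^ 3 + 2 * fps_X ^ 4)
      / ((1 - fps_X) * (1 - fps_X ^ 2) ^ 2 * (1 - fps_X ^ 3) :: 'r::field fps)"
proof -
  let ?den = "(1 - fps_X) * (1 - fps_X ^ 2) ^ 2 * (1 - fps_X ^ 3) :: 'r fps"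
  have "counting_fps {m. standard_mon m} (wdeg src_wt)
      = counting_fps (standard_of_index ` standard_index) (wdeg src_wt)"
    using bij_betw_standard_of_index by (simp add: bij_betw_def)
  also have "\<dots> = counting_fps standard_index (\<lambda>x. wdeg src_wt (standard_of_index x))"
    using bij_betw_standard_of_index by (intro counting_fps_image) (simp add: bij_betw_def)
  also have "\<dots> = (counting_fps standard_index index_wt :: 'r fps)"
    by (simp only: wdeg_standard_of_index)
  finally have reindex:
    "counting_fps {m. standard_mon m} (wdeg src_wt) = (counting_fps standard_index index_wt :: 'r fps)" .
  have "counting_fps {m. standard_mon m} (wdeg src_wt) * ?den
      = 1 + fps_X + 2 * fps_X ^ 2 + 2 * fps_X ^ 3 + 2 * fps_X ^ 4"
    unfolding reindex counting_fps_standard_index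
    by (intro hilbert_series_identity)
      (use counting_fps_multiples[of 1] counting_fps_multiples[of 2] counting_fps_multiples[of 3]
        in simp_all)
  moreover have "fps_nth ?den 0 \<noteq> 0"
    by simp
  then have "?den \<noteq> 0"
    by (intro notI) simp
  ultimately show ?thesis
    by (metis nonzero_mult_div_cancel_right)
qed

theorem lemma4p16:
  shows "(\<forall>P :: src cpoly. in_ideal tgt_rels (subst_cp phi P) \<longleftrightarrow> in_ideal src_rels P)
    \<and> Abs_fps (\<lambda>d. of_nat (hilb_fun src_wt src_rels d) :: complex)
      = (1 + fps_X + 2 * fps_X ^ 2 + 2 * fps_X ^ 3 + 2 * fps_X ^ 4)
        / ((1 - fps_X) * (1 - fps_X ^ 2) ^ 2 * (1 - fps_X ^ 3))"
proof
  show "\<forall>P :: src cpoly. in_ideal tgt_rels (subst_cp phi P) \<longleftrightarrow> in_ideal src_rels P"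
    using subst_phi_in_tgt_ideal_iff by blast
  have "Abs_fps (\<lambda>d. of_nat (hilb_fun src_wt src_rels d) :: complex)
      = counting_fps {m. standard_mon m} (wdeg src_wt)"
    by (simp add: counting_fps_def hilb_fun_eq_card_standard)
  then show "Abs_fps (\<lambda>d. of_nat (hilb_fun src_wt src_rels d) :: complex)
      = (1 + fps_X + 2 * fps_X ^ 2 + 2 * fps_X ^ 3 + 2 * fps_X ^ 4)
        / ((1 - fps_X) * (1 - fps_X ^ 2) ^ 2 * (1 - fps_X ^ 3))"
    by (simp only: counting_fps_standard_mon)
qed

end
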